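(* Let $\Sigma$ and $\Gamma$ be finite alphabets, each with at least two letters, and let $w \in \Sigma^+$. The following are equivalent: 1. $\mathrm{E}_{\mathcal{I}}(w) = \infty$. 2. $\mathrm{E}_{\mathcal{I}}(w) > |w|$. 3. There exist an injective morphism $h:\Sigma^*\to\Gamma^*$ and a letter $a \in \mathrm{alph}(w)$ such that $h(w) = x^r$ for some primitive word $x \in \Gamma^*$ and some rational $r$, and $|h(a)| \ge |x|$. 4. There exist an integer $k \ge 0$, a letter $a \in \Sigma$, words $w_1, w_2, w_3 \in (\Sigma \setminus \{a\})^*$ and an injective morphism $h:\Sigma^*\to\Gamma^*$ such that $w = w_1 (a w_2)^k a w_3$, $h(w_1)$ and $h(w_2)$ are suffix-comparable, and $h(w_2)$ and $h(w_3)$ are prefix-comparable.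
   Context: For a nonempty word $v$ and integer $p\ge 0$, $v^{p/|v|}$ denotes the prefix of length $p$ of the infinite word $vvv\cdots$. For a nonempty finite word $u$, its (fractional) exponent is $\mathrm{E}(u) = \sup\{ r \in \mathbb{Q} : u = v^r \text{ for some nonempty word } v\}$. A word $x$ is primitive if it is not of the form $y^k$ with $k \ge 2$ an integer. A morphism $h:\Sigma^*\to\Gamma^*$ satisfies $h(uv)=h(u)h(v)$ for all words $u,v$. $\mathcal{I}$ is the set of injective morphisms $\Sigma^* \to \Gamma^*$, and $\mathrm{E}_{\mathcal{I}}(w) = \sup\{\mathrm{E}(h(w)) : h \in \mathcal{I}\}$. $\mathrm{alph}(w)$ is the set of letters occurring in $w$. Words $u,v$ are prefix-comparable if $u$ is a prefix of $vs$ for some word $s$; suffix-comparable if $u$ is a suffix of $pv$ for some word $p$. *)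

theory Defs
  imports Complex_Main "HOL-Library.Extended_Real"
begin

text \<open>Words are lists. For nonempty v, frac_pow v p is the prefix of length p of v v v ...\<close>
definition frac_pow :: "'a list \<Rightarrow> nat \<Rightarrow> 'a list" where
  "frac_pow v p = take p (concat (replicate p v))"

definition is_rat_pow :: "'a list \<Rightarrow> 'a list \<Rightarrow> rat \<Rightarrow> bool" where
  "is_rat_pow u v r \<longleftrightarrow> v \<noteq> [] \<and>
     (\<exists>p::nat. of_nat p = r * of_nat (length v) \<and> u = frac_pow v p)"

definition word_exp :: "'a list \<Rightarrow> ereal" where
  "word_exp u = Sup {ereal (of_rat r) | r. \<exists>v. is_rat_pow u v r}"

definition is_morphism :: "('a list \<Rightarrow> 'b list) \<Rightarrow> bool" where
  "is_morphism h \<longleftrightarrow> (\<forall>u v. h (u @ v) = h u @ h v)"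

definition inj_morphisms :: "('a list \<Rightarrow> 'b list) set" where
  "inj_morphisms = {h. is_morphism h \<and> inj h}"

definition exp_I :: "('a list \<Rightarrow> 'b list) set \<Rightarrow> 'a list \<Rightarrow> ereal" where
  "exp_I I w = Sup {word_exp (h w) | h. h \<in> I}"

definition primitive :: "'a list \<Rightarrow> bool" where
  "primitive x \<longleftrightarrow> \<not> (\<exists>y k. k \<ge> 2 \<and> x = concat (replicate k y))"

definition prefix_comparable :: "'a list \<Rightarrow> 'a list \<Rightarrow> bool" where
  "prefix_comparable u v \<longleftrightarrow> (\<exists>s t. v @ s = u @ t)"

definition suffix_comparable :: "'a list \<Rightarrow> 'a list \<Rightarrow> bool" where
  "suffix_comparable u v \<longleftrightarrow> (\<exists>p q. p @ v = q @ u)"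

end

theory Submission
  imports Defs
begin

text \<open>
  (4) \<Longrightarrow> (1): double every letter of the images of \<open>h\<close> and insert a marker \<open>c d\<close> with
  \<open>c \<noteq> d\<close> into the image of \<open>a\<close>; the marker is the first factor of an image that is not aligned
  with the doubled letters, so the new morphism is still injective. The image of \<open>a\<close> may then be
  lengthened so that \<open>a w\<^sub>2\<close> is mapped to an arbitrarily high power \<open>Q\<^sup>n\<close>, and the two
  comparability conditions let the images of \<open>w\<^sub>1\<close> and \<open>w\<^sub>3\<close> continue this periodicity.

  (2) \<Longrightarrow> (3): replace the period of \<open>h(w)\<close> by its primitive root \<open>x\<close>; if every letter
  image were shorter than \<open>x\<close>, then \<open>|h(w)| \<le> |w| |x|\<close>, contradicting \<open>E(h(w)) > |w|\<close>.

  (3) \<Longrightarrow> (4): \<open>h(a)\<close> is at least one period long, so it determines the phase at which each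
  occurrence of \<open>a\<close> sits in the \<open>x\<close>-periodic word \<open>h(w)\<close>; as a primitive word differs from all
  its nontrivial rotations, all occurrences have the same phase. Hence the image of every
  factor \<open>a v\<close> between consecutive occurrences is a power of one conjugate \<open>z\<close> of \<open>x\<close>,
  injectivity forces all these \<open>v\<close> to coincide, and \<open>h(w\<^sub>1)\<close> and \<open>h(w\<^sub>3)\<close> end and start
  inside the same \<open>z\<close>-periodic word.
\<close>

section \<open>Fractional powers\<close>

lemma length_concat_replicate [simp]: "length (concat (replicate k u)) = k * length u"
  by (induction k) auto

lemma concat_replicate_add: "concat (replicate (k + l) u) = concat (replicate k u) @ concat (replicate l u)"
  by (simp add: replicate_add)

lemma concat_replicate_mult: "concat (replicate k (concat (replicate l u))) = concat (replicate (k * l) u)"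
  by (induction k) (simp_all add: replicate_add)

lemma nth_concat_replicate:
  "i < k * length u \<Longrightarrow> concat (replicate k u) ! i = u ! (i mod length u)"
proof (induction k arbitrary: i)
  case (Suc k)
  then show ?case
    by (cases "i < length u") (auto simp: nth_append le_mod_geq)
qed simp

lemma frac_pow_Nil [simp]: "frac_pow [] p = []"
  by (simp add: frac_pow_def)

lemma length_frac_pow [simp]: "v \<noteq> [] \<Longrightarrow> length (frac_pow v p) = p"
  by (cases v) (auto simp: frac_pow_def)

lemma nth_frac_pow: "v \<noteq> [] \<Longrightarrow> i < p \<Longrightarrow> frac_pow v p ! i = v ! (i mod length v)"
proof -
  assume "v \<noteq> []" "i < p"
  then have "i < p * length v"
    by (cases v) auto
  with \<open>i < p\<close> show ?thesis
    by (simp add: frac_pow_def nth_concat_replicate)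
qed

lemma frac_pow_eqI:
  assumes "v \<noteq> []" "length u = p" "\<And>i. i < p \<Longrightarrow> u ! i = v ! (i mod length v)"
  shows "u = frac_pow v p"
  by (rule nth_equalityI) (use assms in \<open>auto simp: nth_frac_pow\<close>)

lemma frac_pow_append:
  assumes "v \<noteq> []"
  shows "frac_pow v (p + q) = frac_pow v p @ frac_pow (rotate p v) q"
proof (rule sym, rule frac_pow_eqI)
  fix i assume "i < p + q"
  show "(frac_pow v p @ frac_pow (rotate p v) q) ! i = v ! (i mod length v)"
  proof (cases "i < p")
    case False
    then have "frac_pow (rotate p v) q ! (i - p) = v ! ((p + (i - p) mod length v) mod length v)"
      using \<open>i < p + q\<close> assms by (simp add: nth_frac_pow nth_rotate)
    also have "\<dots> = v ! (i mod length v)"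
      using False by (simp add: mod_add_right_eq)
    finally show ?thesis
      using False assms by (simp add: nth_append)
  qed (use assms in \<open>simp add: nth_append nth_frac_pow\<close>)
qed (use assms in simp_all)

lemma frac_pow_mult_length: "frac_pow v (k * length v) = concat (replicate k v)"
proof (cases "v = []")
  case False
  then show ?thesis
    by (intro frac_pow_eqI[THEN sym]) (simp_all add: nth_concat_replicate)
qed simp

lemma frac_pow_length: "frac_pow v (length v) = v"
  using frac_pow_mult_length[of v 1] by simp

lemma take_frac_pow: "q \<le> p \<Longrightarrow> take q (frac_pow v p) = frac_pow v q"
  by (cases "v = []") (auto intro!: frac_pow_eqI simp: nth_frac_pow)

lemma frac_pow_concat_replicate:
  "0 < j \<Longrightarrow> frac_pow (concat (replicate j x)) p = frac_pow x p"
  by (cases "x = []") (auto intro!: frac_pow_eqI simp: nth_frac_pow nth_concat_replicate mod_mod_cancel)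

lemma frac_pow_factor:
  assumes "A @ B @ C = frac_pow v p"
  shows "B = frac_pow (rotate (length A) v) (length B)"
proof (cases "v = []")
  case False
  then have "p = length A + length B + length C"
    using arg_cong[OF assms, of length] by simp
  then have "A @ B @ C = frac_pow v (length A) @ frac_pow (rotate (length A) v) (length B)
                         @ frac_pow (rotate (length B) (rotate (length A) v)) (length C)"
    using assms False by (simp add: frac_pow_append add.assoc)
  then show ?thesis
    using False by simp
qed (use assms in simp)

lemma prefix_power_eq_frac_pow:
  assumes "u @ s = concat (replicate k v)"
  shows "u = frac_pow v (length u)"
proof -
  have "length u \<le> k * length v"
    using arg_cong[OF assms, of length] by simp
  then have "take (length u) (frac_pow v (k * length v)) = frac_pow v (length u)"
    by (rule take_frac_pow)
  then show ?thesis
    using assms by (metis append_eq_conv_conj frac_pow_mult_length)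
qed

lemma append_frac_pow_conjugate:
  "s @ frac_pow (r @ s) q = frac_pow (s @ r) (length s + q)"
proof (cases "s @ r = []")
  case False
  have "frac_pow (s @ r) (length s) = s"
    using take_frac_pow[of "length s" "length (s @ r)" "s @ r"] frac_pow_length[of "s @ r"] by simp
  then show ?thesis
    using False by (simp add: frac_pow_append rotate_append)
qed simp

lemma append_prefix_power_eq_frac_pow:
  assumes "u @ s = concat (replicate k (r @ v))"
  shows "v @ u = frac_pow (v @ r) (length (v @ u))"
proof -
  have "v @ u = v @ frac_pow (r @ v) (length u)"
    using prefix_power_eq_frac_pow[OF assms] by (rule arg_cong)
  also have "\<dots> = frac_pow (v @ r) (length (v @ u))"
    using append_frac_pow_conjugate[of v r "length u"] by simp
  finally show ?thesis .
qed

lemma frac_pow_append_rotate_power: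
  "frac_pow v p @ concat (replicate k (rotate p v)) = concat (replicate k v) @ frac_pow v p"
proof (cases "v = []")
  case False
  have "frac_pow v p @ concat (replicate k (rotate p v)) = frac_pow v (p + k * length v)"
    using False frac_pow_mult_length[of "rotate p v" k] by (simp add: frac_pow_append)
  also have "\<dots> = frac_pow v (k * length v + p)"
    by (simp add: add.commute)
  also have "\<dots> = concat (replicate k v) @ frac_pow v p"
    using False by (simp add: frac_pow_append frac_pow_mult_length rotate_conv_mod[of "k * length v"])
  finally show ?thesis .
qed simp

lemma prefix_comparable_frac_pow: "prefix_comparable (frac_pow v p) (frac_pow v q)"
proof (cases "p \<le> q")
  case True
  then show ?thesis
    unfolding prefix_comparable_def by (metis append_Nil2 append_take_drop_id take_frac_pow)
next
  case False
  then show ?thesis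
    unfolding prefix_comparable_def by (metis append_Nil2 append_take_drop_id take_frac_pow nat_le_linear)
qed

lemma prefix_comparable_append_cancel:
  "prefix_comparable (w @ u) (w @ v) \<Longrightarrow> prefix_comparable u v"
  by (simp add: prefix_comparable_def)

lemma is_rat_pow_frac_pow:
  "v \<noteq> [] \<Longrightarrow> is_rat_pow (frac_pow v p) v (of_nat p / of_nat (length v))"
  by (simp add: is_rat_pow_def)

lemma word_exp_ge:
  assumes "v \<noteq> []" "u = frac_pow v (length u)" "n * length v \<le> length u"
  shows "ereal (real n) \<le> word_exp u"
proof -
  define r :: rat where "r = of_nat (length u) / of_nat (length v)"
  have "is_rat_pow u v r"
    using is_rat_pow_frac_pow[OF assms(1), of "length u"] assms(2) by (simp add: r_def)
  then have "ereal (of_rat r) \<le> word_exp u"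
    unfolding word_exp_def by (intro Sup_upper) blast
  moreover have "real n \<le> of_rat r"
    using assms(1,3) by (simp add: r_def of_rat_divide le_divide_eq flip: of_nat_mult)
  ultimately show ?thesis
    by (meson ereal_less_eq(3) order_trans)
qed

lemma less_word_exp_imp_frac_pow:
  assumes "ereal c < word_exp u"
  shows "\<exists>v p. v \<noteq> [] \<and> u = frac_pow v p \<and> c * real (length v) < real p"
proof -
  obtain r v where "is_rat_pow u v r" and "c < of_rat r"
    using assms unfolding word_exp_def less_Sup_iff by auto
  moreover from \<open>is_rat_pow u v r\<close> obtain p where
    "v \<noteq> []" "of_nat p = r * of_nat (length v)" "u = frac_pow v p"
    unfolding is_rat_pow_def by blast
  moreover from this have "real p = of_rat r * real (length v)"
    by (metis of_rat_mult of_rat_of_nat_eq)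
  ultimately show ?thesis
    by (intro exI[of _ v] exI[of _ p]) simp
qed

lemma word_exp_le_exp_I: "h \<in> I \<Longrightarrow> word_exp (h w) \<le> exp_I I w"
  unfolding exp_I_def by (rule Sup_upper) blast

lemma less_exp_I_imp: "ereal c < exp_I I w \<Longrightarrow> \<exists>h\<in>I. ereal c < word_exp (h w)"
  unfolding exp_I_def less_Sup_iff by blast

section \<open>Primitive words\<close>

lemma not_primitive_Nil: "\<not> primitive []"
  unfolding primitive_def by (metis concat_replicate_trivial order_refl)

lemma primitive_root:
  "v \<noteq> [] \<Longrightarrow> \<exists>x j. primitive x \<and> 0 < j \<and> v = concat (replicate j x)"
proof (induction "length v" arbitrary: v rule: less_induct)
  case less
  show ?case
  proof (cases "primitive v")
    case True
    then show ?thesis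
      by (intro exI[of _ v] exI[of _ 1]) auto
  next
    case False
    then obtain y k where "2 \<le> k" "v = concat (replicate k y)"
      unfolding primitive_def by blast
    moreover from this have "y \<noteq> []" "length y < length v"
      using less.prems by (auto simp: less_le_trans[of _ "2 * length y"])
    ultimately show ?thesis
      using less.hyps[of y] by (metis concat_replicate_mult nat_0_less_mult_iff zero_less_iff_neq_zero
          le_zero_eq zero_neq_numeral)
  qed
qed

lemma primitive_rotate_eq_self:
  assumes "primitive x" "rotate d x = x"
  shows "length x dvd d"
proof (rule ccontr)
  assume "\<not> length x dvd d"
  define e where "e = d mod length x"
  have "x \<noteq> []"
    using assms(1) not_primitive_Nil by blast
  then have "0 < e" "e < length x"
    using \<open>\<not> length x dvd d\<close> by (auto simp: e_def mod_greater_zero_iff_not_dvd)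
  have "drop e x @ take e x = take e x @ drop e x"
    using assms(2) \<open>e < length x\<close> by (simp add: rotate_drop_take e_def)
  moreover have "take e x \<noteq> []" "drop e x \<noteq> []"
    using \<open>0 < e\<close> \<open>e < length x\<close> by auto
  ultimately obtain k y where "1 < k" "concat (replicate k y) = x"
    using comm_append_is_replicate[of "take e x" "drop e x"] by auto
  then show False
    using assms(1) unfolding primitive_def by (metis Suc_leI one_add_one plus_1_eq_Suc)
qed

lemma primitive_rotate_eq_iff:
  assumes "primitive x"
  shows "rotate r x = rotate s x \<longleftrightarrow> r mod length x = s mod length x"
proof
  assume "rotate r x = rotate s x"
  define k where "k = length x - s mod length x"
  have "0 < length x"
    using assms not_primitive_Nil by auto
  then have "(k + s) mod length x = 0"
    unfolding k_def by (metis le_add_diff_inverse2 mod_add_right_eq mod_le_divisor mod_self)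
  then have "rotate (k + r) x = x"
    using \<open>rotate r x = rotate s x\<close> by (metis rotate_rotate rotate_conv_mod rotate0 id_apply)
  then have "(k + r) mod length x = (k + s) mod length x"
    using primitive_rotate_eq_self[OF assms] \<open>(k + s) mod length x = 0\<close> by auto
  then show "r mod length x = s mod length x"
    by (simp add: nat_mod_eq_iff)
qed (metis rotate_conv_mod)

lemma morphism_append: "is_morphism h \<Longrightarrow> h (u @ v) = h u @ h v"
  unfolding is_morphism_def by blast

lemma morphism_Nil: "is_morphism h \<Longrightarrow> h [] = []"
  using morphism_append[of h "[]" "[]"] by simp

lemma morphism_Cons: "is_morphism h \<Longrightarrow> h (c # v) = h [c] @ h v"
  using morphism_append[of h "[c]" v] by simp

lemma morphism_concat_replicate:
  "is_morphism h \<Longrightarrow> h (concat (replicate k u)) = concat (replicate k (h u))"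
  by (induction k) (simp_all add: morphism_Nil morphism_append)

lemma morphism_length_le:
  assumes "is_morphism h" "\<And>c. c \<in> set w \<Longrightarrow> length (h [c]) \<le> m"
  shows "length (h w) \<le> length w * m"
  using assms(2)
proof (induction w)
  case (Cons c w)
  then show ?case
    using morphism_Cons[OF assms(1), of c w] by fastforce
qed (simp add: morphism_Nil[OF assms(1)])

section \<open>Doubling with a marker\<close>

lemma is_morphism_concat_map: "is_morphism (\<lambda>xs. concat (map G xs))"
  unfolding is_morphism_def by simp

definition double :: "'a list \<Rightarrow> 'a list" where
  "double xs = concat (map (\<lambda>c. [c, c]) xs)"

lemma double_simps [simp]:
  "double [] = []" "double (c # xs) = c # c # double xs" "double (xs @ ys) = double xs @ double ys"
  "length (double xs) = 2 * length xs"
  unfolding double_def by (induction xs) auto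

lemma double_eq_iff [simp]: "double xs = double ys \<longleftrightarrow> xs = ys"
proof (induction xs arbitrary: ys)
  case Nil then show ?case by (cases ys) auto
next
  case (Cons c xs) then show ?case by (cases ys) auto
qed

lemma double_marker_eq_iff:
  "c \<noteq> d \<Longrightarrow> double xs @ c # d # u = double ys @ c # d # v \<longleftrightarrow> xs = ys \<and> u = v"
proof (induction xs arbitrary: ys)
  case Nil then show ?case by (cases ys) auto
next
  case (Cons e xs) then show ?case by (cases ys) auto
qed

lemma double_marker_neq: "c \<noteq> d \<Longrightarrow> double xs @ c # d # u \<noteq> double ys"
proof (induction xs arbitrary: ys)
  case Nil then show ?case by (cases ys) auto
next
  case (Cons e xs) then show ?case by (cases ys) auto
qed

lemma concat_map_double_image:
  assumes "is_morphism h" "\<And>b. b \<noteq> a \<Longrightarrow> G b = double (h [b])" "a \<notin> set xs"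
  shows "concat (map G xs) = double (h xs)"
  using assms(3)
proof (induction xs)
  case (Cons b xs)
  then show ?case
    using morphism_Cons[OF assms(1), of b xs] assms(2)[of b] by auto
qed (simp add: morphism_Nil[OF assms(1)])

lemma concat_map_marked_double_image:
  assumes "is_morphism h" "G a = double t @ c # d # r" "\<And>b. b \<noteq> a \<Longrightarrow> G b = double (h [b])"
    and "a \<in> set xs"
  shows "\<exists>xs0 xs1. xs = xs0 @ a # xs1 \<and>
           concat (map G xs) = double (h xs0 @ t) @ c # d # r @ concat (map G xs1)"
proof -
  obtain xs0 xs1 where "xs = xs0 @ a # xs1" "a \<notin> set xs0"
    using split_list_first[OF assms(4)] by blast
  then show ?thesis
    using concat_map_double_image[OF assms(1,3) \<open>a \<notin> set xs0\<close>] assms(2) by auto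
qed

lemma inj_marked_double_morphism:
  assumes "is_morphism h" "inj h" "c \<noteq> d"
    and marked: "G a = double t @ c # d # r"
    and unmarked: "\<And>b. b \<noteq> a \<Longrightarrow> G b = double (h [b])"
  shows "inj (\<lambda>xs. concat (map G xs))"
proof -
  let ?g = "\<lambda>xs. concat (map G xs)"
  have free: "?g xs = double (h xs)" if "a \<notin> set xs" for xs
    using assms(1) unmarked that by (rule concat_map_double_image)
  have first_marker: "\<exists>xs0 xs1. xs = xs0 @ a # xs1 \<and> ?g xs = double (h xs0 @ t) @ c # d # r @ ?g xs1"
    if "a \<in> set xs" for xs
    using assms(1) marked unmarked that by (rule concat_map_marked_double_image)
  have mixed: "?g xs \<noteq> ?g ys" if "a \<in> set xs" "a \<notin> set ys" for xs ys
    using first_marker[OF that(1)] free[OF that(2)] double_marker_neq[OF \<open>c \<noteq> d\<close>] by metis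
  have "xs = ys" if "?g xs = ?g ys" for xs ys
    using that
  proof (induction "length xs" arbitrary: xs ys rule: less_induct)
    case less
    consider "a \<in> set xs" "a \<in> set ys" | "a \<notin> set xs" "a \<notin> set ys"
      | "a \<in> set xs" "a \<notin> set ys" | "a \<notin> set xs" "a \<in> set ys"
      by blast
    then show ?case
    proof cases
      case 1
      then obtain xs0 xs1 ys0 ys1 where
        xs: "xs = xs0 @ a # xs1" "?g xs = double (h xs0 @ t) @ c # d # r @ ?g xs1" and
        ys: "ys = ys0 @ a # ys1" "?g ys = double (h ys0 @ t) @ c # d # r @ ?g ys1"
        using first_marker by meson
      then have "double (h xs0 @ t) @ c # d # r @ ?g xs1 = double (h ys0 @ t) @ c # d # r @ ?g ys1"
        using less.prems by argo
      then have "h xs0 @ t = h ys0 @ t \<and> r @ ?g xs1 = r @ ?g ys1"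
        by (simp only: double_marker_eq_iff[OF \<open>c \<noteq> d\<close>])
      moreover have "length xs1 < length xs"
        using xs(1) by simp
      ultimately show ?thesis
        using xs(1) ys(1) less.hyps[of xs1 ys1] \<open>inj h\<close> by (simp add: inj_eq)
    next
      case 2
      then show ?thesis
        using less.prems free \<open>inj h\<close> by (simp add: inj_eq)
    next
      case 3
      then show ?thesis
        using less.prems mixed by blast
    next
      case 4
      then show ?thesis
        using less.prems mixed[of ys xs] by simp
    qed
  qed
  then show ?thesis
    by (rule injI)
qed

lemma exists_marked_double_morphism:
  fixes h :: "'a list \<Rightarrow> 'b list"
  assumes "c \<noteq> d" "h \<in> inj_morphisms"
  shows "\<exists>g\<in>inj_morphisms :: ('a list \<Rightarrow> 'b list) set.
           g [a] = double t @ c # d # r \<and> (\<forall>xs. a \<notin> set xs \<longrightarrow> g xs = double (h xs))"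
proof -
  define G where "G b = (if b = a then double t @ c # d # r else double (h [b]))" for b
  have "is_morphism h" "inj h"
    using assms(2) by (auto simp: inj_morphisms_def)
  have marked: "G a = double t @ c # d # r" and unmarked: "\<And>b. b \<noteq> a \<Longrightarrow> G b = double (h [b])"
    by (simp_all add: G_def)
  have "inj (\<lambda>xs. concat (map G xs))"
    using \<open>is_morphism h\<close> \<open>inj h\<close> \<open>c \<noteq> d\<close> marked unmarked by (rule inj_marked_double_morphism)
  moreover have "concat (map G xs) = double (h xs)" if "a \<notin> set xs" for xs
    using \<open>is_morphism h\<close> unmarked that by (rule concat_map_double_image)
  ultimately show ?thesis
    using marked is_morphism_concat_map[of G]
    by (intro bexI[of _ "\<lambda>xs. concat (map G xs)"]) (simp_all add: inj_morphisms_def)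
qed

section \<open>Unbounded exponent from a factorization with comparable images\<close>

lemma append_power_append:
  "u @ concat (replicate n (v @ u)) @ v = concat (replicate (Suc n) (u @ v))"
  by (induction n) simp_all

lemma exists_inj_morphism_word_exp_ge:
  fixes h :: "'a list \<Rightarrow> 'b list" and c d :: 'b
  assumes "c \<noteq> d" and "h \<in> inj_morphisms"
    and "a \<notin> set w1" "a \<notin> set w2" "a \<notin> set w3"
    and w: "w = w1 @ concat (replicate k (a # w2)) @ a # w3"
    and "suffix_comparable (h w1) (h w2)" "prefix_comparable (h w2) (h w3)"
  shows "\<exists>g\<in>inj_morphisms :: ('a list \<Rightarrow> 'b list) set. ereal (real n) \<le> word_exp (g w)"
proof -
  obtain t' q where tq: "t' @ h w2 = q @ h w1"
    using assms(7) unfolding suffix_comparable_def by blast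
  obtain s t where st: "h w3 @ s = h w2 @ t"
    using assms(8) unfolding prefix_comparable_def by blast
  define X where "X = double t @ [c, d]"
  define Y where "Y = double (t' @ h w2)"
  define Q where "Q = X @ Y"
  define P where "P = X @ double q"
  have QPS: "Q = P @ double (h w1)"
    unfolding Q_def Y_def P_def tq by simp
  obtain g :: "'a list \<Rightarrow> 'b list" where "g \<in> inj_morphisms"
    and ga: "g [a] = double t @ c # d # concat (replicate n (Y @ X)) @ double t'"
    and free: "\<And>xs. a \<notin> set xs \<Longrightarrow> g xs = double (h xs)"
    using exists_marked_double_morphism[OF assms(1,2)] by blast
  have "is_morphism g"
    using \<open>g \<in> inj_morphisms\<close> by (simp add: inj_morphisms_def)
  note g_append = morphism_append[OF this] and g_Cons = morphism_Cons[OF this]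
  have "g (a # w2) = X @ concat (replicate n (Y @ X)) @ Y"
    using g_Cons[of a w2] ga free[OF assms(4)] by (simp add: X_def Y_def)
  also have "\<dots> = concat (replicate (Suc n) Q)"
    unfolding Q_def by (rule append_power_append)
  finally have ga_w2: "g (a # w2) = concat (replicate (Suc n) Q)" .
  define T where "T = concat (replicate (k * Suc n) Q) @ g [a] @ double (h w3)"
  have "g (concat (replicate k (a # w2))) = concat (replicate (k * Suc n) Q)"
    by (simp only: morphism_concat_replicate[OF \<open>is_morphism g\<close>] ga_w2 concat_replicate_mult)
  then have gw: "g w = double (h w1) @ T"
    unfolding w T_def using g_append g_Cons[of a w3] free[OF assms(3)] free[OF assms(5)] by simp
  have "double (h w3) @ double s = double (h w2) @ double t"
    using arg_cong[OF st, of double] by simp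
  then have "T @ double s @ [c, d] @ Y = concat (replicate (k * Suc n) Q) @ g (a # w2) @ X @ Y"
    using g_Cons[of a w2] free[OF assms(4)] by (simp add: T_def X_def)
  also have "\<dots> = concat (replicate (k * Suc n + Suc n + 1) (P @ double (h w1)))"
    unfolding concat_replicate_add ga_w2 QPS[symmetric] by (simp add: Q_def)
  finally have "double (h w1) @ T = frac_pow (double (h w1) @ P) (length (double (h w1) @ T))"
    by (rule append_prefix_power_eq_frac_pow)
  moreover have "n * length Q \<le> length (g w)"
    unfolding gw T_def ga by (simp add: Q_def add.commute)
  then have "n * length (double (h w1) @ P) \<le> length (g w)"
    by (simp add: QPS add.commute)
  ultimately have "ereal (real n) \<le> word_exp (g w)"
    using word_exp_ge[of "double (h w1) @ P" "g w" n] gw by (simp add: P_def X_def)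
  then show ?thesis
    using \<open>g \<in> inj_morphisms\<close> by blast
qed

lemma factorization_imp_exp_I_infinite:
  fixes c d :: 'b
  assumes "c \<noteq> d"
    and "\<exists>(k::nat) a w1 w2 w3. \<exists>h\<in>inj_morphisms :: ('a list \<Rightarrow> 'b list) set.
           a \<notin> set w1 \<and> a \<notin> set w2 \<and> a \<notin> set w3 \<and>
           w = w1 @ concat (replicate k (a # w2)) @ a # w3 \<and>
           suffix_comparable (h w1) (h w2) \<and> prefix_comparable (h w2) (h w3)"
  shows "exp_I (inj_morphisms :: ('a list \<Rightarrow> 'b list) set) w = \<infinity>"
proof -
  obtain k a w1 w2 w3 and h :: "'a list \<Rightarrow> 'b list" where "h \<in> inj_morphisms"
    "a \<notin> set w1" "a \<notin> set w2" "a \<notin> set w3" "w = w1 @ concat (replicate k (a # w2)) @ a # w3"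
    "suffix_comparable (h w1) (h w2)" "prefix_comparable (h w2) (h w3)"
    using assms(2) by blast
  note pumping = exists_inj_morphism_word_exp_ge[OF assms(1) this]
  show ?thesis
  proof (rule ereal_top)
    fix B :: real
    obtain g :: "'a list \<Rightarrow> 'b list"
      where "g \<in> inj_morphisms" and "ereal (real (nat \<lceil>B\<rceil>)) \<le> word_exp (g w)"
      using pumping by blast
    have "ereal B \<le> ereal (real (nat \<lceil>B\<rceil>))"
      by (simp add: real_nat_ceiling_ge)
    also have "\<dots> \<le> word_exp (g w)"
      by fact
    also have "\<dots> \<le> exp_I (inj_morphisms :: ('a list \<Rightarrow> 'b list) set) w"
      using \<open>g \<in> inj_morphisms\<close> by (rule word_exp_le_exp_I)
    finally show "ereal B \<le> exp_I (inj_morphisms :: ('a list \<Rightarrow> 'b list) set) w" .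
  qed
qed

section \<open>A long letter image from a large exponent\<close>

lemma long_letter_image_if_word_exp_gt_length:
  assumes "is_morphism h" and "ereal (real (length w)) < word_exp (h w)"
  shows "\<exists>a\<in>set w. \<exists>x r. primitive x \<and> is_rat_pow (h w) x r \<and> length x \<le> length (h [a])"
proof -
  obtain v p where "v \<noteq> []" "h w = frac_pow v p" "real (length w) * real (length v) < real p"
    using less_word_exp_imp_frac_pow[OF assms(2)] by blast
  moreover obtain x j where "primitive x" "0 < j" "v = concat (replicate j x)"
    using primitive_root[OF \<open>v \<noteq> []\<close>] by blast
  ultimately have "x \<noteq> []" "h w = frac_pow x p"
    using frac_pow_concat_replicate[of j x p] not_primitive_Nil by auto
  have "length w * length x \<le> length w * length v"
    using \<open>v = concat (replicate j x)\<close> \<open>0 < j\<close> by simp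
  also have "\<dots> < p"
    using \<open>real (length w) * real (length v) < real p\<close> by (metis of_nat_less_iff of_nat_mult)
  finally have "length w * length x < p" .
  have "\<exists>a\<in>set w. length x \<le> length (h [a])"
  proof (rule ccontr)
    assume "\<not> ?thesis"
    then have "length (h w) \<le> length w * length x"
      by (intro morphism_length_le[OF assms(1)]) auto
    with \<open>length w * length x < p\<close> \<open>h w = frac_pow x p\<close> \<open>x \<noteq> []\<close> show False
      by simp
  qed
  then show ?thesis
    using \<open>primitive x\<close> is_rat_pow_frac_pow[OF \<open>x \<noteq> []\<close>, of p] \<open>h w = frac_pow x p\<close> by auto
qed

lemma exp_I_gt_length_imp_long_letter_image:
  assumes "ereal (real (length w)) < exp_I (inj_morphisms :: ('a list \<Rightarrow> 'b list) set) w"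
  shows "\<exists>h\<in>inj_morphisms :: ('a list \<Rightarrow> 'b list) set. \<exists>a\<in>set w. \<exists>x r.
           primitive x \<and> is_rat_pow (h w) x r \<and> length (h [a]) \<ge> length x"
proof -
  obtain h :: "'a list \<Rightarrow> 'b list" where "h \<in> inj_morphisms" "ereal (real (length w)) < word_exp (h w)"
    using less_exp_I_imp[OF assms] by blast
  then show ?thesis
    using long_letter_image_if_word_exp_gt_length[of h w] by (auto simp: inj_morphisms_def)
qed

section \<open>A factorization with comparable images from a long letter image\<close>

lemma takeWhile_tl_concat_replicate:
  assumes "a \<notin> set v" "0 < m"
  shows "takeWhile (\<lambda>c. c \<noteq> a) (tl (concat (replicate m (a # v)))) = v"
proof -
  obtain m' where "m = Suc m'"
    using assms(2) gr0_implies_Suc by blast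
  moreover have "\<forall>c\<in>set v. c \<noteq> a"
    using assms(1) by blast
  ultimately show ?thesis
    by (cases m') simp_all
qed

lemma equal_gaps_decomposition:
  assumes gaps: "\<And>u v' u'. w = u @ a # v' @ a # u' \<Longrightarrow> a \<notin> set v' \<Longrightarrow> v' = v"
    and "w = u @ a # s"
  shows "\<exists>k w3. a \<notin> set w3 \<and> a # s = concat (replicate k (a # v)) @ a # w3"
  using assms(2)
proof (induction "length s" arbitrary: u s rule: less_induct)
  case less
  show ?case
  proof (cases "a \<in> set s")
    case False
    then show ?thesis
      by (intro exI[of _ 0] exI[of _ s]) simp
  next
    case True
    then obtain v' s' where s: "s = v' @ a # s'" "a \<notin> set v'"
      by (metis split_list_first)
    then have "v' = v"
      using gaps less.prems by simp
    moreover obtain k w3 where "a \<notin> set w3" "a # s' = concat (replicate k (a # v)) @ a # w3"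
      using less.hyps[of s' "u @ a # v'"] less.prems s by auto
    ultimately show ?thesis
      using s by (intro exI[of _ "Suc k"] exI[of _ w3]) simp
  qed
qed

context
  fixes h :: "'a list \<Rightarrow> 'b list" and w :: "'a list" and x :: "'b list" and p :: nat and a :: 'a
  assumes morphism: "is_morphism h" and "inj h" and primitive: "primitive x"
    and periodic: "h w = frac_pow x p" and long_letter: "length x \<le> length (h [a])"
begin

lemma period_nonempty: "x \<noteq> []"
  using primitive not_primitive_Nil by blast

lemma image_factor_frac_pow:
  "w = u @ v @ v' \<Longrightarrow> h v = frac_pow (rotate (length (h u)) x) (length (h v))"
  using periodic by (intro frac_pow_factor) (simp add: morphism_append[OF morphism])

lemma occurrence_rotation_eq:
  assumes "w = u @ a # v" "w = u' @ a # v'"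
  shows "rotate (length (h u)) x = rotate (length (h u')) x"
proof -
  have "rotate (length (h u)) x = take (length x) (h [a])" if "w = u @ a # v" for u v
  proof -
    have "h [a] = frac_pow (rotate (length (h u)) x) (length (h [a]))"
      using that by (intro image_factor_frac_pow) simp
    then show ?thesis
      using take_frac_pow[OF long_letter, of "rotate (length (h u)) x"]
        frac_pow_length[of "rotate (length (h u)) x"] by (metis length_rotate)
  qed
  then show ?thesis
    using assms by metis
qed

lemma gap_image_power:
  assumes "w = u @ a # v @ a # v'"
  shows "\<exists>m>0. h (a # v) = concat (replicate m (rotate (length (h u)) x))"
proof -
  define z where "z = rotate (length (h u)) x"
  have "rotate (length (h u) + length (h (a # v))) x = z"
    using occurrence_rotation_eq[of "u @ a # v" v' u "v @ a # v'"] assms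
    by (simp add: z_def morphism_append[OF morphism])
  then have "length x dvd length (h (a # v))"
    using primitive_rotate_eq_iff[OF primitive] by (simp add: z_def mod_eq_dvd_iff_nat)
  then obtain m where m: "length (h (a # v)) = m * length x"
    by (metis dvd_div_mult_self)
  have "0 < length x"
    using period_nonempty by simp
  moreover have "length x \<le> length (h (a # v))"
    using long_letter morphism_Cons[OF morphism, of a v] by simp
  ultimately have "0 < m"
    using m by (simp add: gr0I)
  moreover have "h (a # v) = frac_pow z (m * length z)"
    using image_factor_frac_pow[of u "a # v" "a # v'"] assms m by (simp add: z_def)
  ultimately show ?thesis
    using frac_pow_mult_length z_def by metis
qed

lemma gap_unique:
  assumes "w = u @ a # v @ a # v0" "a \<notin> set v" "w = u' @ a # v' @ a # v0'" "a \<notin> set v'"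
  shows "v = v'"
proof -
  define z where "z = rotate (length (h u)) x"
  have "z = rotate (length (h u')) x"
    using occurrence_rotation_eq assms(1,3) z_def by blast
  then obtain m m' where "0 < m" "h (a # v) = concat (replicate m z)"
    and "0 < m'" "h (a # v') = concat (replicate m' z)"
    using gap_image_power assms(1,3) z_def by metis
  then have "h (concat (replicate m' (a # v))) = h (concat (replicate m (a # v')))"
    by (simp add: morphism_concat_replicate[OF morphism] concat_replicate_mult mult.commute)
  then have "concat (replicate m' (a # v)) = concat (replicate m (a # v'))"
    using \<open>inj h\<close> by (simp add: inj_eq)
  then show ?thesis
    using takeWhile_tl_concat_replicate assms(2,4) \<open>0 < m\<close> \<open>0 < m'\<close> by metis
qed

lemma suffix_comparable_gap:
  assumes "w = u @ a # v @ a # v'"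
  shows "suffix_comparable (h u) (h v)"
proof -
  define l where "l = length (h u)"
  obtain m where "h (a # v) = concat (replicate m (rotate l x))"
    using gap_image_power[OF assms] l_def by blast
  moreover have "h u = frac_pow x l"
    using image_factor_frac_pow[of "[]" u "a # v @ a # v'"] assms
    by (simp add: l_def morphism_Nil[OF morphism])
  ultimately have "(h u @ h [a]) @ h v = concat (replicate m x) @ h u"
    using frac_pow_append_rotate_power[of x l m] morphism_Cons[OF morphism, of a v] by simp
  then show ?thesis
    unfolding suffix_comparable_def by blast
qed

lemma prefix_comparable_gap:
  assumes "w = u @ a # v @ a # v'" "w = u' @ a # v''"
  shows "prefix_comparable (h v) (h v'')"
proof -
  define z where "z = rotate (length (h u)) x"
  obtain m where "h (a # v) = concat (replicate m z)"
    using gap_image_power[OF assms(1)] z_def by blast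
  then have "h [a] @ h v = frac_pow z (m * length z)"
    using morphism_Cons[OF morphism, of a v] by (simp add: frac_pow_mult_length)
  moreover have "h [a] @ h v'' = frac_pow z (length (h (a # v'')))"
    using image_factor_frac_pow[of u' "a # v''" "[]"] occurrence_rotation_eq[of u _ u' v''] assms
      morphism_Cons[OF morphism, of a v''] by (simp add: z_def period_nonempty)
  ultimately show ?thesis
    using prefix_comparable_frac_pow prefix_comparable_append_cancel by metis
qed

lemma factorization_with_comparable_images:
  assumes "a \<in> set w"
  shows "\<exists>k w1 w2 w3. a \<notin> set w1 \<and> a \<notin> set w2 \<and> a \<notin> set w3 \<and>
           w = w1 @ concat (replicate k (a # w2)) @ a # w3 \<and>
           suffix_comparable (h w1) (h w2) \<and> prefix_comparable (h w2) (h w3)"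
proof -
  obtain w1 s where w: "w = w1 @ a # s" "a \<notin> set w1"
    using split_list_first[OF assms] by blast
  show ?thesis
  proof (cases "a \<in> set s")
    case False
    have "suffix_comparable (h w1) (h [])" "prefix_comparable (h []) (h s)"
      unfolding suffix_comparable_def prefix_comparable_def morphism_Nil[OF morphism] by auto
    with w False show ?thesis
      by (intro exI[of _ 0] exI[of _ w1] exI[of _ "[]"] exI[of _ s]) simp
  next
    case True
    then obtain v s' where s: "s = v @ a # s'" "a \<notin> set v"
      by (metis split_list_first)
    have "v' = v" if "w = u @ a # v' @ a # u'" "a \<notin> set v'" for u v' u'
      using gap_unique[OF that] s w(1) by simp
    then obtain k w3 where "a \<notin> set w3" "a # s = concat (replicate k (a # v)) @ a # w3"
      using equal_gaps_decomposition[OF _ w(1)] by blast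
    moreover have "w = w1 @ a # v @ a # s'"
      using w(1) s(1) by simp
    ultimately show ?thesis
      using w s suffix_comparable_gap[of w1 v s']
        prefix_comparable_gap[of w1 v s' "w1 @ concat (replicate k (a # v))" w3]
      by (intro exI[of _ k] exI[of _ w1] exI[of _ v] exI[of _ w3]) simp
  qed
qed

end

lemma long_letter_image_imp_factorization:
  assumes "\<exists>h\<in>inj_morphisms :: ('a list \<Rightarrow> 'b list) set. \<exists>a\<in>set w. \<exists>x r.
             primitive x \<and> is_rat_pow (h w) x r \<and> length (h [a]) \<ge> length x"
  shows "\<exists>(k::nat) a w1 w2 w3. \<exists>h\<in>inj_morphisms :: ('a list \<Rightarrow> 'b list) set.
           a \<notin> set w1 \<and> a \<notin> set w2 \<and> a \<notin> set w3 \<and>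
           w = w1 @ concat (replicate k (a # w2)) @ a # w3 \<and>
           suffix_comparable (h w1) (h w2) \<and> prefix_comparable (h w2) (h w3)"
proof -
  obtain h :: "'a list \<Rightarrow> 'b list" and a x r where "h \<in> inj_morphisms" "a \<in> set w" "primitive x"
    "is_rat_pow (h w) x r" "length x \<le> length (h [a])"
    using assms by blast
  moreover from \<open>is_rat_pow (h w) x r\<close> obtain p where "h w = frac_pow x p"
    unfolding is_rat_pow_def by blast
  ultimately show ?thesis
    using factorization_with_comparable_images[of h x w p a] unfolding inj_morphisms_def by blast
qed

theorem theorem9:
  fixes w :: "'a::finite list"
    and I :: "('a list \<Rightarrow> 'b::finite list) set"
  assumes "card (UNIV :: 'a set) \<ge> 2" and "card (UNIV :: 'b set) \<ge> 2"
    and "w \<noteq> []"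
    and "I = inj_morphisms"
  shows "(exp_I I w = \<infinity> \<longleftrightarrow> exp_I I w > ereal (real (length w)))
       \<and> (exp_I I w > ereal (real (length w)) \<longleftrightarrow>
           (\<exists>h\<in>I. \<exists>a\<in>set w. \<exists>x r. primitive x \<and> is_rat_pow (h w) x r
                                   \<and> length (h [a]) \<ge> length x))
       \<and> ((\<exists>h\<in>I. \<exists>a\<in>set w. \<exists>x r. primitive x \<and> is_rat_pow (h w) x r
                                   \<and> length (h [a]) \<ge> length x) \<longleftrightarrow>
          (\<exists>(k::nat) (a::'a) w1 w2 w3. \<exists>h\<in>I.
              a \<notin> set w1 \<and> a \<notin> set w2 \<and> a \<notin> set w3 \<and>
              w = w1 @ concat (replicate k (a # w2)) @ a # w3 \<and>
              suffix_comparable (h w1) (h w2) \<and> prefix_comparable (h w2) (h w3)))"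
proof -
  \<comment> \<open>Only the two letters \<open>c \<noteq> d\<close> of \<open>\<Gamma>\<close> are needed.\<close>
  obtain c d :: 'b where "c \<noteq> d"
    using assms(2) card_le_Suc0_iff_eq[of "UNIV :: 'b set"] by auto
  have "exp_I I w = \<infinity> \<Longrightarrow> exp_I I w > ereal (real (length w))"
    by simp
  then show ?thesis
    unfolding assms(4)
    using exp_I_gt_length_imp_long_letter_image[where 'b = 'b, of w]
      long_letter_image_imp_factorization[where 'b = 'b, of w]
      factorization_imp_exp_I_infinite[OF \<open>c \<noteq> d\<close>, of w]
    by argo
qed

end
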